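(* Let $A,B$ be Hermitian matrices of the same size, let $H=i[A,B]$, and for real $t$ let $S(t)=e^{itB}e^{itA}e^{-itB}e^{-itA}$. Then for every $\Delta t\ge0$, $$\Big\|S\big(\sqrt{\Delta t/2}\big)\,S\big(-\sqrt{\Delta t/2}\big)-e^{-iH\Delta t}\Big\|\le\Big[\frac83\big(\|A\|+\|B\|\big)^4+\frac12\|H\|^2\Big]\Delta t^2,$$ where $\|\cdot\|$ is the spectral norm. *)

theory Defs
  imports "HOL-Analysis.Analysis"
begin

definition hermitian_mat :: "complex^'n^'n \<Rightarrow> bool" where
  "hermitian_mat A \<longleftrightarrow> (\<forall>i j. A $ i $ j = cnj (A $ j $ i))"

definition cmat_scale :: "complex \<Rightarrow> complex^'n^'n \<Rightarrow> complex^'n^'n" where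
  "cmat_scale c A = (\<chi> i j. c * A $ i $ j)"

fun mat_pow :: "complex^'n^'n \<Rightarrow> nat \<Rightarrow> complex^'n^'n" where
  "mat_pow A 0 = mat 1"
| "mat_pow A (Suc k) = A ** mat_pow A k"

definition mat_exp :: "complex^'n^'n \<Rightarrow> complex^'n^'n" where
  "mat_exp A = (\<Sum>k. (1 / fact k) *\<^sub>R mat_pow A k)"

definition spec_norm :: "complex^'n^'n \<Rightarrow> real" where
  "spec_norm A = onorm (\<lambda>x::complex^'n. A *v x)"

end

theory Submission
  imports Defs
begin

text \<open>
  Put X = i A, Y = i B and s = sqrt (dt / 2), so that S t = e^(tY) e^(tX) e^(-tY) e^(-tX) and
  e^(-i H dt) = e^(2 s^2 (YX - XY)). Call F Taylor-dominated with rate M if norm (F s) <= 1 for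
  s >= 0 and its Taylor coefficients and all its Taylor remainders are bounded by those of
  exp (M s). A contractive exponential e^(sG) is Taylor-dominated with rate norm G, and the class
  is closed under products, the rates adding up. Hence S s * S (-s), a product of eight such
  exponentials, agrees with its cubic Taylor polynomial 1 + 2 s^2 (YX - XY) up to
  (4 (norm X + norm Y) s)^4 / 4!, while e^(2 s^2 (YX - XY)) agrees with the same polynomial up to
  (2 s^2 norm (YX - XY))^2 / 2. This holds in any Banach algebra; complex matrices with the
  spectral norm form one, and for Hermitian A and B all the exponentials involved are unitary.
\<close>

section \<open>Taylor remainders of contractive exponentials\<close>

lemma has_real_derivative_power_div_fact:
  "((\<lambda>u. u ^ Suc k / fact (Suc k)) has_real_derivative u ^ k / fact k) (at u within S)"
proof -
  have "((\<lambda>u. u ^ Suc k / fact (Suc k))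
      has_real_derivative real (Suc k) * u ^ k / fact (Suc k)) (at u within S)"
    using DERIV_cdivide[OF DERIV_pow[of "Suc k" u S], of "fact (Suc k)"] by simp
  then show ?thesis
    by (simp del: of_nat_Suc)
qed

lemma sum_power_div_fact_binomial:
  fixes a b :: real
  shows "(\<Sum>i\<le>k. a ^ i / fact i * (b ^ (k - i) / fact (k - i))) = (a + b) ^ k / fact k"
  using exp_series_add_commuting[of a b k] by (simp add: divide_inverse mult.commute)

lemma sum_triangle_lessThan:
  fixes g :: "nat \<Rightarrow> nat \<Rightarrow> 'a::comm_monoid_add"
  shows "(\<Sum>i<m. \<Sum>l<m - i. g i l) = (\<Sum>k<m. \<Sum>i\<le>k. g i (k - i))"
proof -
  have "{(i, j). i + j < m} = Sigma {..<m} (\<lambda>i. {..<m - i})" by auto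
  then show ?thesis
    using sum.triangle_reindex[of g m] by (simp add: sum.Sigma)
qed

lemma has_vector_derivative_exp_scaleR_minus_taylor:
  fixes G :: "'a::{real_normed_algebra_1,banach}"
  shows "((\<lambda>u. exp (u *\<^sub>R G) - (\<Sum>k<Suc j. (u ^ k / fact k) *\<^sub>R G ^ k))
          has_vector_derivative G * (exp (u *\<^sub>R G) - (\<Sum>k<j. (u ^ k / fact k) *\<^sub>R G ^ k)))
        (at u within S)"
proof -
  have shift: "(\<Sum>k<Suc j. (u ^ k / fact k) *\<^sub>R G ^ k)
      = 1 + (\<Sum>k<j. (u ^ Suc k / fact (Suc k)) *\<^sub>R G ^ Suc k)" for u :: real
    by (subst sum.lessThan_Suc_shift) simp
  have "((\<lambda>u. (u ^ Suc k / fact (Suc k)) *\<^sub>R G ^ Suc k)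
         has_vector_derivative (u ^ k / fact k) *\<^sub>R G ^ Suc k) (at u within S)" for k
    using has_vector_derivative_scaleR[OF has_real_derivative_power_div_fact
        has_vector_derivative_const]
    by simp
  then have "((\<lambda>u. exp (u *\<^sub>R G) - (\<Sum>k<Suc j. (u ^ k / fact k) *\<^sub>R G ^ k))
      has_vector_derivative exp (u *\<^sub>R G) * G - (0 + (\<Sum>k<j. (u ^ k / fact k) *\<^sub>R G ^ Suc k)))
      (at u within S)"
    unfolding shift
    by (intro has_vector_derivative_diff has_vector_derivative_add has_vector_derivative_sum
        exp_scaleR_has_vector_derivative_right has_vector_derivative_const)
  moreover have "exp (u *\<^sub>R G) * G - (0 + (\<Sum>k<j. (u ^ k / fact k) *\<^sub>R G ^ Suc k))
      = G * (exp (u *\<^sub>R G) - (\<Sum>k<j. (u ^ k / fact k) *\<^sub>R G ^ k))"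
    by (simp add: exp_times_scaleR_commute right_diff_distrib sum_distrib_left mult_scaleR_right)
  ultimately show ?thesis by simp
qed

text \<open>The contraction hypothesis removes the usual factor exp (s * norm G) from the
  remainder bound.\<close>
lemma norm_exp_scaleR_minus_taylor_le:
  fixes G :: "'a::{real_normed_algebra_1,banach}"
  assumes contraction: "\<And>u. u \<ge> 0 \<Longrightarrow> norm (exp (u *\<^sub>R G)) \<le> 1" and "s \<ge> 0"
  shows "norm (exp (s *\<^sub>R G) - (\<Sum>k<j. (s ^ k / fact k) *\<^sub>R G ^ k))
    \<le> (s * norm G) ^ j / fact j"
  using \<open>s \<ge> 0\<close>
proof (induction j arbitrary: s)
  case 0
  then show ?case using contraction by simp
next
  case (Suc j)
  define R where "R j u = exp (u *\<^sub>R G) - (\<Sum>k<j. (u ^ k / fact k) *\<^sub>R G ^ k)" for j u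
  have "((\<lambda>u. G * R j u) has_integral R (Suc j) s - R (Suc j) 0) {0..s}"
    using Suc.prems has_vector_derivative_exp_scaleR_minus_taylor
    by (intro fundamental_theorem_of_calculus) (auto simp: R_def)
  moreover have "R (Suc j) 0 = 0"
    by (simp add: R_def sum.lessThan_Suc_shift del: sum.lessThan_Suc)
  ultimately have int_R: "((\<lambda>u. G * R j u) has_integral R (Suc j) s) {0..s}"
    by simp
  have int_bound: "((\<lambda>u. norm G ^ Suc j * (u ^ j / fact j))
      has_integral norm G ^ Suc j * (s ^ Suc j / fact (Suc j))) {0..s}"
    using fundamental_theorem_of_calculus[OF Suc.prems,
        of "\<lambda>u. norm G ^ Suc j * (u ^ Suc j / fact (Suc j))"]
      DERIV_cmult[OF has_real_derivative_power_div_fact]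
    by (simp add: has_real_derivative_iff_has_vector_derivative)
  have bound: "norm (G * R j u) \<le> norm G ^ Suc j * (u ^ j / fact j)" if "u \<in> {0..s}" for u
  proof -
    have "norm (G * R j u) \<le> norm G * norm (R j u)" by (rule norm_mult_ineq)
    also have "\<dots> \<le> norm G * ((u * norm G) ^ j / fact j)"
      using Suc.IH[of u] that by (intro mult_left_mono) (auto simp: R_def)
    finally show ?thesis by (simp add: power_mult_distrib field_simps)
  qed
  have "norm (R (Suc j) s) \<le> norm G ^ Suc j * (s ^ Suc j / fact (Suc j))"
    using integral_norm_bound_integral[OF has_integral_integrable[OF int_R]
        has_integral_integrable[OF int_bound] bound]
    unfolding integral_unique[OF int_R] integral_unique[OF int_bound] .
  then show ?case
    by (simp add: R_def power_mult_distrib mult_ac)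
qed

section \<open>Taylor-dominated functions\<close>

definition cauchy_coeff :: "(nat \<Rightarrow> 'a::semiring_0) \<Rightarrow> (nat \<Rightarrow> 'a) \<Rightarrow> nat \<Rightarrow> 'a" where
  "cauchy_coeff c d k = (\<Sum>i\<le>k. c i * d (k - i))"

definition exp_coeff :: "'a::real_normed_algebra_1 \<Rightarrow> nat \<Rightarrow> 'a" where
  "exp_coeff G k = G ^ k /\<^sub>R fact k"

definition taylor_dominated ::
    "(real \<Rightarrow> 'a::real_normed_algebra_1) \<Rightarrow> (nat \<Rightarrow> 'a) \<Rightarrow> real \<Rightarrow> bool" where
  "taylor_dominated F c M \<longleftrightarrow>
     M \<ge> 0 \<and> (\<forall>s\<ge>0. norm (F s) \<le> 1) \<and> (\<forall>k. norm (c k) \<le> M ^ k / fact k) \<and>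
     (\<forall>j s. s \<ge> 0 \<longrightarrow> norm (F s - (\<Sum>k<j. s ^ k *\<^sub>R c k)) \<le> (M * s) ^ j / fact j)"

lemma cauchy_coeff_partial_sum:
  fixes c d :: "nat \<Rightarrow> 'a::real_algebra_1"
  shows "(\<Sum>k<m. s ^ k *\<^sub>R cauchy_coeff c d k)
    = (\<Sum>i<m. (s ^ i *\<^sub>R c i) * (\<Sum>l<m - i. s ^ l *\<^sub>R d l))"
proof -
  have "(\<Sum>k<m. s ^ k *\<^sub>R cauchy_coeff c d k)
      = (\<Sum>k<m. \<Sum>i\<le>k. (s ^ i *\<^sub>R c i) * (s ^ (k - i) *\<^sub>R d (k - i)))"
    unfolding cauchy_coeff_def
    by (intro sum.cong refl) (simp add: scaleR_sum_right power_add[symmetric])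
  also have "\<dots> = (\<Sum>i<m. \<Sum>l<m - i. (s ^ i *\<^sub>R c i) * (s ^ l *\<^sub>R d l))"
    by (rule sum_triangle_lessThan[symmetric])
  finally show ?thesis
    by (simp add: sum_distrib_left)
qed

lemma norm_cauchy_coeff_le:
  fixes c d :: "nat \<Rightarrow> 'a::real_normed_algebra"
  assumes "M \<ge> 0" and "\<And>k. norm (c k) \<le> M ^ k / fact k"
    and "\<And>k. norm (d k) \<le> N ^ k / fact k"
  shows "norm (cauchy_coeff c d k) \<le> (M + N) ^ k / fact k"
proof -
  have "norm (cauchy_coeff c d k) \<le> (\<Sum>i\<le>k. norm (c i) * norm (d (k - i)))"
    unfolding cauchy_coeff_def by (intro norm_sum[THEN order_trans] sum_mono norm_mult_ineq)
  also have "\<dots> \<le> (\<Sum>i\<le>k. M ^ i / fact i * (N ^ (k - i) / fact (k - i)))"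
    using assms by (intro sum_mono mult_mono) auto
  also have "\<dots> = (M + N) ^ k / fact k"
    by (rule sum_power_div_fact_binomial)
  finally show ?thesis .
qed

lemma taylor_dominated_remainder:
  "taylor_dominated F c M \<Longrightarrow> s \<ge> 0 \<Longrightarrow>
    norm (F s - (\<Sum>k<j. s ^ k *\<^sub>R c k)) \<le> (M * s) ^ j / fact j"
  unfolding taylor_dominated_def by blast

lemma taylor_dominated_mult:
  fixes F G :: "real \<Rightarrow> 'a::real_normed_algebra_1"
  assumes F: "taylor_dominated F c M" and G: "taylor_dominated G d N"
  shows "taylor_dominated (\<lambda>s. F s * G s) (cauchy_coeff c d) (M + N)"
proof -
  from F have "M \<ge> 0" and F_le_1: "\<And>s. s \<ge> 0 \<Longrightarrow> norm (F s) \<le> 1"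
    and c_le: "\<And>k. norm (c k) \<le> M ^ k / fact k"
    unfolding taylor_dominated_def by auto
  from G have "N \<ge> 0" and G_le_1: "\<And>s. s \<ge> 0 \<Longrightarrow> norm (G s) \<le> 1"
    and d_le: "\<And>k. norm (d k) \<le> N ^ k / fact k"
    unfolding taylor_dominated_def by auto
  have "norm (F s * G s) \<le> 1" if "s \<ge> 0" for s
    by (intro order_trans[OF norm_mult_ineq] mult_le_one F_le_1 G_le_1 norm_ge_zero that)
  moreover have "norm (F s * G s - (\<Sum>k<m. s ^ k *\<^sub>R cauchy_coeff c d k))
      \<le> ((M + N) * s) ^ m / fact m" if "s \<ge> 0" for m s
  proof -
    define RF where "RF = F s - (\<Sum>i<m. s ^ i *\<^sub>R c i)"
    define RG where "RG i = G s - (\<Sum>l<m - i. s ^ l *\<^sub>R d l)" for i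
    have c_term_le: "norm (s ^ i *\<^sub>R c i) \<le> (M * s) ^ i / fact i" for i
      using mult_left_mono[OF c_le[of i], of "s ^ i"] \<open>s \<ge> 0\<close>
      by (simp add: power_mult_distrib mult_ac)
    have "(\<Sum>i<m. (s ^ i *\<^sub>R c i) * RG i)
        = (\<Sum>i<m. s ^ i *\<^sub>R c i) * G s
          - (\<Sum>i<m. (s ^ i *\<^sub>R c i) * (\<Sum>l<m - i. s ^ l *\<^sub>R d l))"
      by (simp only: RG_def right_diff_distrib sum_subtractf sum_distrib_right)
    then have "F s * G s - (\<Sum>k<m. s ^ k *\<^sub>R cauchy_coeff c d k)
        = (\<Sum>i<m. (s ^ i *\<^sub>R c i) * RG i) + RF * G s"
      by (simp add: RF_def left_diff_distrib cauchy_coeff_partial_sum)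
    also have "norm \<dots> \<le> (\<Sum>i<m. norm (s ^ i *\<^sub>R c i) * norm (RG i)) + norm RF * norm (G s)"
      by (intro order_trans[OF norm_triangle_ineq] add_mono order_trans[OF norm_sum]
          sum_mono norm_mult_ineq)
    also have "\<dots> \<le> (\<Sum>i<m. (M * s) ^ i / fact i * ((N * s) ^ (m - i) / fact (m - i)))
        + (M * s) ^ m / fact m * 1"
    proof (intro add_mono sum_mono mult_mono)
      show "norm (RG i) \<le> (N * s) ^ (m - i) / fact (m - i)" for i
        unfolding RG_def using taylor_dominated_remainder[OF G \<open>s \<ge> 0\<close>] .
      show "norm RF \<le> (M * s) ^ m / fact m"
        unfolding RF_def using taylor_dominated_remainder[OF F \<open>s \<ge> 0\<close>] .
    qed (use \<open>M \<ge> 0\<close> \<open>s \<ge> 0\<close> G_le_1 c_term_le in auto)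
    also have "\<dots> = (\<Sum>i\<le>m. (M * s) ^ i / fact i * ((N * s) ^ (m - i) / fact (m - i)))"
      by (simp add: lessThan_Suc_atMost[symmetric])
    also have "\<dots> = ((M + N) * s) ^ m / fact m"
      unfolding distrib_right by (rule sum_power_div_fact_binomial)
    finally show ?thesis .
  qed
  ultimately show ?thesis
    using \<open>M \<ge> 0\<close> \<open>N \<ge> 0\<close> norm_cauchy_coeff_le[OF \<open>M \<ge> 0\<close> c_le d_le]
    unfolding taylor_dominated_def by auto
qed

lemma taylor_dominated_exp:
  fixes G :: "'a::{real_normed_algebra_1,banach}"
  assumes "\<And>u. u \<ge> 0 \<Longrightarrow> norm (exp (u *\<^sub>R G)) \<le> 1"
  shows "taylor_dominated (\<lambda>s. exp (s *\<^sub>R G)) (exp_coeff G) (norm G)"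
proof -
  have "norm (exp_coeff G k) \<le> norm G ^ k / fact k" for k
    unfolding exp_coeff_def
    by (simp add: divide_right_mono norm_power_ineq divide_inverse mult.commute)
  moreover have "(\<Sum>k<j. s ^ k *\<^sub>R exp_coeff G k) = (\<Sum>k<j. (s ^ k / fact k) *\<^sub>R G ^ k)" for j s
    by (simp add: exp_coeff_def divide_inverse)
  ultimately show ?thesis
    using assms norm_exp_scaleR_minus_taylor_le[OF assms]
    unfolding taylor_dominated_def by (simp add: mult.commute)
qed

lemma power_uminus_scaleR: "(- G) ^ k = (-1) ^ k *\<^sub>R (G::'a::real_algebra_1) ^ k"
  by (induction k) simp_all

lemma exp_coeff_uminus: "exp_coeff (- G) = (\<lambda>k. (-1) ^ k *\<^sub>R exp_coeff G k)"
  by (simp add: fun_eq_iff exp_coeff_def power_uminus_scaleR[of G])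

lemma cauchy_coeff_alternating:
  fixes a b :: "nat \<Rightarrow> 'a::real_algebra_1"
  shows "cauchy_coeff (\<lambda>k. (-1) ^ k *\<^sub>R a k) (\<lambda>k. (-1) ^ k *\<^sub>R b k) k
    = (-1) ^ k *\<^sub>R cauchy_coeff a b k"
  unfolding cauchy_coeff_def scaleR_sum_right
proof (intro sum.cong refl)
  fix i assume "i \<in> {..k}"
  then have "(-1::real) ^ (k - i) * (-1) ^ i = (-1) ^ k"
    by (simp flip: power_add)
  then show "((-1) ^ i *\<^sub>R a i) * ((-1) ^ (k - i) *\<^sub>R b (k - i))
      = (-1) ^ k *\<^sub>R (a i * b (k - i))"
    by simp
qed

lemma sum_cauchy_coeff_reflected_product_lessThan_4:
  fixes p q :: "nat \<Rightarrow> 'a::real_algebra_1"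
  assumes "p 0 = 1" and "\<And>k. q k = (-1) ^ k *\<^sub>R p k"
  shows "(\<Sum>k<4. s ^ k *\<^sub>R cauchy_coeff (cauchy_coeff p q) (cauchy_coeff q p) k)
    = 1 + (2 * s\<^sup>2) *\<^sub>R (2 *\<^sub>R p 2 - p 1 * p 1)"
proof -
  define w where "w = cauchy_coeff (cauchy_coeff p q) (cauchy_coeff q p)"
  have "w 0 = 1" "w 1 = 0" "w 2 = 2 *\<^sub>R (2 *\<^sub>R p 2 - p 1 * p 1)" "w 3 = 0"
    by (simp_all add: w_def cauchy_coeff_def assms eval_nat_numeral algebra_simps scaleR_2)
  moreover have "(\<Sum>k<4. f k) = f 0 + f 1 + f 2 + f 3" for f :: "nat \<Rightarrow> 'a"
    by (simp add: numeral_eq_Suc add.assoc)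
  ultimately show ?thesis
    unfolding w_def[symmetric] by (simp add: power2_eq_square mult.commute)
qed

lemma group_commutator_product_taylor:
  fixes X Y :: "'a::{real_normed_algebra_1,banach}"
  defines "S t \<equiv> exp (t *\<^sub>R Y) * exp (t *\<^sub>R X) * exp ((- t) *\<^sub>R Y) * exp ((- t) *\<^sub>R X)"
  assumes X: "\<And>u. norm (exp (u *\<^sub>R X)) \<le> 1" and Y: "\<And>u. norm (exp (u *\<^sub>R Y)) \<le> 1"
  obtains w where "taylor_dominated (\<lambda>s. S s * S (- s)) w (4 * (norm X + norm Y))"
    and "\<And>s. (\<Sum>k<4. s ^ k *\<^sub>R w k) = 1 + (2 * s\<^sup>2) *\<^sub>R (Y * X - X * Y)"
proof
  define P where "P s = exp (s *\<^sub>R Y) * exp (s *\<^sub>R X)" for s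
  define Q where "Q s = exp (s *\<^sub>R - Y) * exp (s *\<^sub>R - X)" for s
  define p where "p = cauchy_coeff (exp_coeff Y) (exp_coeff X)"
  define q where "q = cauchy_coeff (exp_coeff (- Y)) (exp_coeff (- X))"
  have P: "taylor_dominated P p (norm Y + norm X)"
    unfolding P_def p_def by (intro taylor_dominated_mult taylor_dominated_exp X Y)
  have "norm (exp (u *\<^sub>R - Y)) \<le> 1" and "norm (exp (u *\<^sub>R - X)) \<le> 1" for u
    using X[of "- u"] Y[of "- u"] by simp_all
  then have "taylor_dominated Q q (norm (- Y) + norm (- X))"
    unfolding Q_def q_def by (intro taylor_dominated_mult taylor_dominated_exp)
  then have Q: "taylor_dominated Q q (norm Y + norm X)"
    by simp
  have four: "norm Y + norm X + (norm Y + norm X) + (norm Y + norm X + (norm Y + norm X))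
      = 4 * (norm X + norm Y)"
    by simp
  have "taylor_dominated (\<lambda>s. (P s * Q s) * (Q s * P s))
      (cauchy_coeff (cauchy_coeff p q) (cauchy_coeff q p)) (4 * (norm X + norm Y))"
    using taylor_dominated_mult[OF taylor_dominated_mult[OF P Q] taylor_dominated_mult[OF Q P]]
    unfolding four .
  moreover have "S s * S (- s) = (P s * Q s) * (Q s * P s)" for s
    by (simp add: S_def P_def Q_def mult.assoc)
  ultimately show "taylor_dominated (\<lambda>s. S s * S (- s))
      (cauchy_coeff (cauchy_coeff p q) (cauchy_coeff q p)) (4 * (norm X + norm Y))"
    by simp
  have "q k = (-1) ^ k *\<^sub>R p k" for k
    by (simp add: q_def p_def exp_coeff_uminus cauchy_coeff_alternating)
  moreover have "p 0 = 1" and "2 *\<^sub>R p 2 - p 1 * p 1 = Y * X - X * Y"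
    by (simp_all add: p_def cauchy_coeff_def exp_coeff_def eval_nat_numeral algebra_simps
        scaleR_2)
  ultimately show "(\<Sum>k<4. s ^ k *\<^sub>R cauchy_coeff (cauchy_coeff p q) (cauchy_coeff q p) k)
      = 1 + (2 * s\<^sup>2) *\<^sub>R (Y * X - X * Y)" for s
    by (simp add: sum_cauchy_coeff_reflected_product_lessThan_4)
qed

theorem norm_group_commutator_product_minus_exp_le:
  fixes X Y :: "'a::{real_normed_algebra_1,banach}"
  defines "S t \<equiv> exp (t *\<^sub>R Y) * exp (t *\<^sub>R X) * exp ((- t) *\<^sub>R Y) * exp ((- t) *\<^sub>R X)"
  assumes X: "\<And>u. norm (exp (u *\<^sub>R X)) \<le> 1" and Y: "\<And>u. norm (exp (u *\<^sub>R Y)) \<le> 1"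
    and commutator: "\<And>u. u \<ge> 0 \<Longrightarrow> norm (exp (u *\<^sub>R (Y * X - X * Y))) \<le> 1"
    and "s \<ge> 0"
  shows "norm (S s * S (- s) - exp ((2 * s\<^sup>2) *\<^sub>R (Y * X - X * Y)))
    \<le> 32 / 3 * (norm X + norm Y) ^ 4 * s ^ 4 + 2 * s ^ 4 * (norm (Y * X - X * Y))\<^sup>2"
proof -
  define D where "D = Y * X - X * Y"
  obtain w where w: "taylor_dominated (\<lambda>s. S s * S (- s)) w (4 * (norm X + norm Y))"
    and w_sum: "(\<Sum>k<4. s ^ k *\<^sub>R w k) = 1 + (2 * s\<^sup>2) *\<^sub>R D"
    using group_commutator_product_taylor[OF X Y] unfolding S_def D_def by blast
  have "norm (S s * S (- s) - (1 + (2 * s\<^sup>2) *\<^sub>R D))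
      \<le> (4 * (norm X + norm Y) * s) ^ 4 / fact 4"
    using taylor_dominated_remainder[OF w \<open>s \<ge> 0\<close>, of 4] unfolding w_sum .
  moreover have "norm ((1 + (2 * s\<^sup>2) *\<^sub>R D) - exp ((2 * s\<^sup>2) *\<^sub>R D))
      \<le> (2 * s\<^sup>2 * norm D) ^ 2 / fact 2"
    using norm_exp_scaleR_minus_taylor_le[of D "2 * s\<^sup>2" 2] commutator \<open>s \<ge> 0\<close>
    by (subst norm_minus_commute) (simp add: D_def eval_nat_numeral)
  ultimately have "norm (S s * S (- s) - exp ((2 * s\<^sup>2) *\<^sub>R D))
      \<le> (4 * (norm X + norm Y) * s) ^ 4 / fact 4 + (2 * s\<^sup>2 * norm D) ^ 2 / fact 2"
    by (rule norm_diff_triangle_le)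
  also have "\<dots> = 32 / 3 * (norm X + norm Y) ^ 4 * s ^ 4 + 2 * s ^ 4 * (norm D)\<^sup>2"
    by (simp add: power_mult_distrib fact_numeral del: distrib_left_numeral flip: power_mult)
  finally show ?thesis
    unfolding D_def .
qed

section \<open>Square complex matrices as a Banach algebra\<close>

lemma spec_norm_apply_le: "norm (A *v x) \<le> spec_norm A * norm x"
  unfolding spec_norm_def by (rule onorm[OF matrix_vector_mul_bounded_linear])

lemma spec_norm_leI: "(\<And>x. norm (A *v x) \<le> b * norm x) \<Longrightarrow> spec_norm A \<le> b"
  unfolding spec_norm_def by (rule onorm_le)

lemma spec_norm_nonneg: "spec_norm A \<ge> 0"
  unfolding spec_norm_def by (rule onorm_pos_le[OF matrix_vector_mul_bounded_linear])

lemma spec_norm_add_le: "spec_norm (A + B) \<le> spec_norm A + spec_norm B"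
proof (rule spec_norm_leI)
  fix x
  have "norm ((A + B) *v x) \<le> norm (A *v x) + norm (B *v x)"
    by (simp add: matrix_vector_mult_add_rdistrib norm_triangle_ineq)
  also have "\<dots> \<le> (spec_norm A + spec_norm B) * norm x"
    by (simp add: distrib_right add_mono spec_norm_apply_le)
  finally show "norm ((A + B) *v x) \<le> (spec_norm A + spec_norm B) * norm x" .
qed

lemma spec_norm_mult_le: "spec_norm (A ** B) \<le> spec_norm A * spec_norm B"
proof (rule spec_norm_leI)
  fix x
  have "norm ((A ** B) *v x) \<le> spec_norm A * norm (B *v x)"
    by (metis matrix_vector_mul_assoc spec_norm_apply_le)
  also have "\<dots> \<le> spec_norm A * spec_norm B * norm x"
    by (simp add: mult.assoc mult_left_mono spec_norm_apply_le spec_norm_nonneg)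
  finally show "norm ((A ** B) *v x) \<le> spec_norm A * spec_norm B * norm x" .
qed

lemma scaleR_matrix_vector_mult: "(r *\<^sub>R A) *v x = r *\<^sub>R (A *v x)" for A :: "'a::real_algebra_1^'n^'m"
  by (simp add: vec_eq_iff matrix_vector_mult_def scaleR_sum_right)

lemma spec_norm_scaleR: "spec_norm (r *\<^sub>R A) = \<bar>r\<bar> * spec_norm A"
  unfolding spec_norm_def scaleR_matrix_vector_mult
  by (rule onorm_scaleR[OF matrix_vector_mul_bounded_linear])

lemma spec_norm_mat_1: "spec_norm (mat 1 :: complex^'n^'n) = 1"
proof -
  have "(\<lambda>x::complex^'n. mat 1 *v x) = (\<lambda>x. x)"
    by simp
  then show ?thesis
    unfolding spec_norm_def by (simp only: onorm_id)
qed

lemma norm_entry_le_spec_norm: "norm (A $ i $ j) \<le> spec_norm A"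
proof -
  have "A $ i $ j = (A *v axis j 1) $ i"
    by (simp add: matrix_vector_mult_def axis_def if_distrib cong: if_cong)
  also have "norm \<dots> \<le> spec_norm A * norm (axis j (1::complex))"
    by (rule order_trans[OF Finite_Cartesian_Product.norm_nth_le spec_norm_apply_le])
  also have "norm (axis j (1::complex)) = 1"
    by (simp add: norm_eq_1 inner_axis')
  finally show ?thesis by simp
qed

lemma norm_le_card_spec_norm:
  "norm A \<le> real CARD('n) * real CARD('n) * spec_norm (A :: complex^'n^'n)"
proof -
  have "norm A \<le> (\<Sum>i\<in>UNIV. \<Sum>j\<in>UNIV. norm (A $ i $ j))"
    unfolding norm_vec_def
    by (intro order_trans[OF L2_set_le_sum] sum_mono) (simp_all add: norm_vec_def L2_set_le_sum)
  also have "\<dots> \<le> (\<Sum>i\<in>(UNIV::'n set). \<Sum>j\<in>(UNIV::'n set). spec_norm A)"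
    by (intro sum_mono norm_entry_le_spec_norm)
  finally show ?thesis by simp
qed

lemma spec_norm_eq_0_iff: "spec_norm A = 0 \<longleftrightarrow> A = 0"
  using norm_le_card_spec_norm[of A] by (auto simp: spec_norm_def onorm_zero)

lemma matrix_add_rdistrib: "(B + C) ** A = B ** A + C ** A" for A :: "'a::semiring_1^'p^'n"
  by (vector matrix_matrix_mult_def sum.distrib[symmetric] field_simps)

lemma mat_1_neq_0: "(mat 1 :: 'a::zero_neq_one^'n^'n) \<noteq> 0"
  by (auto simp: vec_eq_iff mat_def)

text \<open>A copy of \<open>complex^'n^'n\<close> with the matrix product as multiplication and the spectral
  norm as norm: a Banach algebra, so that the estimates above apply to matrices.\<close>
typedef ('n::finite) cmat = "UNIV :: (complex^'n^'n) set"
  by simp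

setup_lifting type_definition_cmat

instantiation cmat :: (finite) ring_1
begin
lift_definition zero_cmat :: "'a cmat" is 0 .
lift_definition one_cmat :: "'a cmat" is "mat 1" .
lift_definition plus_cmat :: "'a cmat \<Rightarrow> 'a cmat \<Rightarrow> 'a cmat" is "(+)" .
lift_definition minus_cmat :: "'a cmat \<Rightarrow> 'a cmat \<Rightarrow> 'a cmat" is "(-)" .
lift_definition uminus_cmat :: "'a cmat \<Rightarrow> 'a cmat" is uminus .
lift_definition times_cmat :: "'a cmat \<Rightarrow> 'a cmat \<Rightarrow> 'a cmat" is "(**)" .
instance
  by standard (transfer; simp add: matrix_mul_assoc matrix_add_ldistrib matrix_add_rdistrib
      mat_1_neq_0 algebra_simps)+
end

instantiation cmat :: (finite) real_vector
begin
lift_definition scaleR_cmat :: "real \<Rightarrow> 'a cmat \<Rightarrow> 'a cmat" is scaleR .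
instance
  by standard (transfer; simp add: scaleR_right_distrib scaleR_left_distrib)+
end

instantiation cmat :: (finite) real_normed_vector
begin
lift_definition norm_cmat :: "'a cmat \<Rightarrow> real" is spec_norm .
definition sgn_cmat :: "'a cmat \<Rightarrow> 'a cmat" where "sgn_cmat x = x /\<^sub>R norm x"
definition dist_cmat :: "'a cmat \<Rightarrow> 'a cmat \<Rightarrow> real" where "dist_cmat x y = norm (x - y)"
definition uniformity_cmat :: "('a cmat \<times> 'a cmat) filter" where
  "uniformity_cmat = (INF e\<in>{0<..}. principal {(x, y). dist x y < e})"
definition open_cmat :: "'a cmat set \<Rightarrow> bool" where
  "open_cmat U \<longleftrightarrow>
    (\<forall>x\<in>U. eventually (\<lambda>(x', y). x' = x \<longrightarrow> y \<in> U) uniformity)"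
instance
proof
  fix x y :: "'a cmat" and r :: real
  show "norm (x + y) \<le> norm x + norm y"
    by transfer (rule spec_norm_add_le)
  show "norm (r *\<^sub>R x) = \<bar>r\<bar> * norm x"
    by transfer (rule spec_norm_scaleR)
  show "norm x = 0 \<longleftrightarrow> x = 0"
    by transfer (rule spec_norm_eq_0_iff)
qed (simp_all add: sgn_cmat_def dist_cmat_def uniformity_cmat_def open_cmat_def)
end

instance cmat :: (finite) real_normed_algebra_1
  by standard
    (transfer; simp add: scalar_matrix_assoc matrix_scalar_ac spec_norm_mult_le spec_norm_mat_1)+

lemma bounded_linear_Rep_cmat: "bounded_linear Rep_cmat"
proof (rule bounded_linear_intro[where K = "real CARD('n) * real CARD('n)"])
  show "norm (Rep_cmat x) \<le> norm x * (real CARD('n) * real CARD('n))" for x :: "'n::finite cmat"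
    using norm_le_card_spec_norm[of "Rep_cmat x"] by (simp add: norm_cmat.rep_eq mult.commute)
qed (simp_all add: plus_cmat.rep_eq scaleR_cmat.rep_eq)

lemma bounded_linear_Abs_cmat: "bounded_linear (Abs_cmat :: complex^'n^'n \<Rightarrow> 'n::finite cmat)"
  unfolding linear_conv_bounded_linear[symmetric]
  by (rule linearI) (simp_all add: plus_cmat.abs_eq scaleR_cmat.abs_eq eq_onp_True)

instance cmat :: (finite) banach
proof
  fix X :: "nat \<Rightarrow> 'a cmat"
  assume "Cauchy X"
  then have "Cauchy (\<lambda>n. Rep_cmat (X n))"
    by (rule bounded_linear.Cauchy[OF bounded_linear_Rep_cmat])
  then obtain L where "(\<lambda>n. Rep_cmat (X n)) \<longlonglongrightarrow> L"
    using Cauchy_convergent_iff convergent_def by blast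
  then have "X \<longlonglongrightarrow> Abs_cmat L"
    using bounded_linear.tendsto[OF bounded_linear_Abs_cmat] by (fastforce simp: Rep_cmat_inverse)
  then show "convergent X"
    by (auto simp: convergent_def)
qed

lemma Rep_cmat_power: "Rep_cmat (x ^ n) = mat_pow (Rep_cmat x) n"
  by (induction n) (simp_all add: one_cmat.rep_eq times_cmat.rep_eq)

lemma Rep_cmat_exp: "Rep_cmat (exp x) = mat_exp (Rep_cmat x)"
proof -
  have "Rep_cmat (exp x) = (\<Sum>n. Rep_cmat (x ^ n /\<^sub>R fact n))"
    unfolding exp_def by (rule bounded_linear.suminf[OF bounded_linear_Rep_cmat summable_exp_generic])
  then show ?thesis
    by (simp add: mat_exp_def scaleR_cmat.rep_eq Rep_cmat_power divide_inverse)
qed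

lemma summable_mat_exp: "summable (\<lambda>n. (1 / fact n) *\<^sub>R mat_pow (A :: complex^'n::finite^'n) n)"
  using bounded_linear.summable[OF bounded_linear_Rep_cmat summable_exp_generic[of "Abs_cmat A"]]
  by (simp add: scaleR_cmat.rep_eq Rep_cmat_power Abs_cmat_inverse divide_inverse)

section \<open>Unitary exponentials\<close>

definition conj_transpose :: "complex^'n^'m \<Rightarrow> complex^'m^'n" where
  "conj_transpose A = (\<chi> i j. cnj (A $ j $ i))"

definition skew_hermitian_mat :: "complex^'n^'n \<Rightarrow> bool" where
  "skew_hermitian_mat Z \<longleftrightarrow> conj_transpose Z = - Z"

lemma conj_transpose_mult: "conj_transpose (A ** B) = conj_transpose B ** conj_transpose A"
  by (simp add: conj_transpose_def vec_eq_iff matrix_matrix_mult_def mult.commute)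

lemma conj_transpose_diff: "conj_transpose (A - B) = conj_transpose A - conj_transpose B"
  by (simp add: conj_transpose_def vec_eq_iff)

lemma conj_transpose_scaleR: "conj_transpose (r *\<^sub>R A) = r *\<^sub>R conj_transpose A"
  by (simp add: conj_transpose_def vec_eq_iff)

lemma conj_transpose_mat_1: "conj_transpose (mat 1) = mat 1"
  by (simp add: conj_transpose_def vec_eq_iff mat_def)

lemma mat_pow_commute: "mat_pow A n ** A = A ** mat_pow A n"
  by (induction n) (simp_all add: matrix_mul_assoc[symmetric])

lemma conj_transpose_mat_pow: "conj_transpose (mat_pow A n) = mat_pow (conj_transpose A) n"
  by (induction n) (simp_all add: conj_transpose_mat_1 conj_transpose_mult mat_pow_commute)

lemma bounded_linear_conj_transpose:
  "bounded_linear (conj_transpose :: complex^'n::finite^'m::finite \<Rightarrow> _)"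
  unfolding linear_conv_bounded_linear[symmetric]
  by (rule linearI) (simp_all add: conj_transpose_def vec_eq_iff)

lemma conj_transpose_mat_exp: "conj_transpose (mat_exp A) = mat_exp (conj_transpose A)"
proof -
  have "conj_transpose (mat_exp A) = (\<Sum>n. conj_transpose ((1 / fact n) *\<^sub>R mat_pow A n))"
    unfolding mat_exp_def
    by (rule bounded_linear.suminf[OF bounded_linear_conj_transpose summable_mat_exp])
  then show ?thesis
    by (simp add: mat_exp_def conj_transpose_mat_pow conj_transpose_scaleR)
qed

definition vec_cinner :: "complex^'n \<Rightarrow> complex^'n \<Rightarrow> complex" where
  "vec_cinner x y = (\<Sum>i\<in>UNIV. x $ i * cnj (y $ i))"

lemma vec_cinner_self: "vec_cinner x x = of_real ((norm x)\<^sup>2)"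
  unfolding vec_cinner_def complex_norm_square[symmetric] of_real_sum[symmetric] of_real_eq_iff
  by (simp add: norm_vec_def L2_set_def sum_nonneg)

lemma vec_cinner_matrix_vector_mult: "vec_cinner (U *v x) y = vec_cinner x (conj_transpose U *v y)"
proof -
  have "vec_cinner (U *v x) y = (\<Sum>i\<in>UNIV. \<Sum>j\<in>UNIV. U $ i $ j * x $ j * cnj (y $ i))"
    by (simp add: vec_cinner_def matrix_vector_mult_def sum_distrib_right)
  also have "\<dots> = (\<Sum>j\<in>UNIV. \<Sum>i\<in>UNIV. U $ i $ j * x $ j * cnj (y $ i))"
    by (rule sum.swap)
  finally show ?thesis
    by (simp add: vec_cinner_def matrix_vector_mult_def conj_transpose_def sum_distrib_left mult_ac)
qed

lemma norm_unitary_mult: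
  assumes "conj_transpose U ** U = mat 1"
  shows "norm (U *v x) = norm x"
proof -
  have "vec_cinner (U *v x) (U *v x) = vec_cinner x x"
    by (simp add: vec_cinner_matrix_vector_mult matrix_vector_mul_assoc assms)
  then show ?thesis
    by (simp only: vec_cinner_self of_real_eq_iff) simp
qed

lemma spec_norm_mat_exp_le_1:
  assumes "skew_hermitian_mat Z"
  shows "spec_norm (mat_exp Z) \<le> 1"
proof (rule spec_norm_leI)
  have "conj_transpose (mat_exp Z) ** mat_exp Z = Rep_cmat (exp (- Abs_cmat Z) * exp (Abs_cmat Z))"
    using assms
    by (simp add: skew_hermitian_mat_def conj_transpose_mat_exp times_cmat.rep_eq Rep_cmat_exp
        uminus_cmat.rep_eq Abs_cmat_inverse)
  also have "\<dots> = mat 1"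
    by (metis exp_minus_inverse minus_minus one_cmat.rep_eq)
  finally show "norm (mat_exp Z *v x) \<le> 1 * norm x" for x
    by (simp add: norm_unitary_mult)
qed

lemma skew_hermitian_mat_scaleR: "skew_hermitian_mat Z \<Longrightarrow> skew_hermitian_mat (r *\<^sub>R Z)"
  by (simp add: skew_hermitian_mat_def conj_transpose_def vec_eq_iff)

lemma matrix_mult_uminus_uminus: "(- A) ** (- B) = A ** B" for A :: "'a::ring_1^'n^'m"
  by (simp add: matrix_matrix_mult_def vec_eq_iff sum_negf)

lemma skew_hermitian_mat_commutator:
  "skew_hermitian_mat Z \<Longrightarrow> skew_hermitian_mat W \<Longrightarrow> skew_hermitian_mat (Z ** W - W ** Z)"
  by (simp add: skew_hermitian_mat_def conj_transpose_diff conj_transpose_mult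
      matrix_mult_uminus_uminus)

lemma norm_exp_scaleR_cmat_le_1:
  "skew_hermitian_mat (Rep_cmat Z) \<Longrightarrow> norm (exp (u *\<^sub>R Z)) \<le> 1"
  by (simp add: norm_cmat.rep_eq Rep_cmat_exp scaleR_cmat.rep_eq spec_norm_mat_exp_le_1
      skew_hermitian_mat_scaleR)

lemma spec_norm_group_commutator_product_minus_exp_le:
  fixes Z W :: "complex^'n^'n"
  defines "T t \<equiv> mat_exp (t *\<^sub>R W) ** mat_exp (t *\<^sub>R Z)
    ** mat_exp ((- t) *\<^sub>R W) ** mat_exp ((- t) *\<^sub>R Z)"
  assumes "skew_hermitian_mat Z" and "skew_hermitian_mat W" and "s \<ge> 0"
  shows "spec_norm (T s ** T (- s) - mat_exp ((2 * s\<^sup>2) *\<^sub>R (W ** Z - Z ** W)))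
    \<le> 32 / 3 * (spec_norm Z + spec_norm W) ^ 4 * s ^ 4
      + 2 * s ^ 4 * (spec_norm (W ** Z - Z ** W))\<^sup>2"
proof -
  define X Y where "X = Abs_cmat Z" and "Y = Abs_cmat W"
  have Rep: "Rep_cmat X = Z" "Rep_cmat Y = W" "Rep_cmat (Y * X - X * Y) = W ** Z - Z ** W"
    by (simp_all add: X_def Y_def Abs_cmat_inverse times_cmat.rep_eq minus_cmat.rep_eq)
  then have "norm (exp (u *\<^sub>R X)) \<le> 1" "norm (exp (u *\<^sub>R Y)) \<le> 1"
    "norm (exp (u *\<^sub>R (Y * X - X * Y))) \<le> 1" for u
    using assms(2,3) by (simp_all add: norm_exp_scaleR_cmat_le_1 skew_hermitian_mat_commutator)
  from norm_group_commutator_product_minus_exp_le[OF this \<open>s \<ge> 0\<close>] show ?thesis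
    by (simp add: T_def Rep norm_cmat.rep_eq Rep_cmat_exp scaleR_cmat.rep_eq times_cmat.rep_eq
        minus_cmat.rep_eq uminus_cmat.rep_eq)
qed

lemma cmat_scale_mult_of_real: "cmat_scale (c * of_real u) A = u *\<^sub>R cmat_scale c A"
  by (simp add: vec_eq_iff cmat_scale_def) (simp add: scaleR_conv_of_real mult_ac)

lemma spec_norm_cmat_scale: "cmod c = 1 \<Longrightarrow> spec_norm (cmat_scale c A) = spec_norm A"
proof -
  assume "cmod c = 1"
  then have "norm (cmat_scale c A *v x) = norm (A *v x)" for x
    by (simp add: norm_vec_def cmat_scale_def matrix_vector_mult_def norm_mult
        sum_distrib_left[symmetric] mult.assoc)
  then show ?thesis
    by (simp add: spec_norm_def onorm_def)
qed

lemma skew_hermitian_mat_cmat_scale_i: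
  assumes "hermitian_mat A"
  shows "skew_hermitian_mat (cmat_scale \<i> A)"
proof -
  have "cnj (A $ j $ i) = A $ i $ j" for i j
    using assms unfolding hermitian_mat_def by metis
  then show ?thesis
    by (simp add: skew_hermitian_mat_def conj_transpose_def cmat_scale_def vec_eq_iff)
qed

theorem mainTheorem11:
  fixes A B :: "complex^'n^'n" and dt :: real
  assumes "hermitian_mat A" and "hermitian_mat B" and "dt \<ge> 0"
  defines "H \<equiv> cmat_scale \<i> (A ** B - B ** A)"
  defines "S \<equiv> (\<lambda>t::real. mat_exp (cmat_scale (\<i> * of_real t) B) ** mat_exp (cmat_scale (\<i> * of_real t) A)
                  ** mat_exp (cmat_scale (- \<i> * of_real t) B) ** mat_exp (cmat_scale (- \<i> * of_real t) A))"
  shows "spec_norm (S (sqrt (dt / 2)) ** S (- sqrt (dt / 2)) - mat_exp (cmat_scale (- \<i> * of_real dt) H))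
           \<le> (8 / 3 * (spec_norm A + spec_norm B) ^ 4 + 1 / 2 * (spec_norm H)\<^sup>2) * dt\<^sup>2"
proof -
  define s where "s = sqrt (dt / 2)"
  define Z W where "Z = cmat_scale \<i> A" and "W = cmat_scale \<i> B"
  have "- \<i> * of_real t = \<i> * of_real (- t)" for t
    by simp
  then have S: "S t = mat_exp (t *\<^sub>R W) ** mat_exp (t *\<^sub>R Z)
      ** mat_exp ((- t) *\<^sub>R W) ** mat_exp ((- t) *\<^sub>R Z)" for t
    by (simp only: S_def Z_def W_def cmat_scale_mult_of_real)
  have comm: "W ** Z - Z ** W = cmat_scale (- \<i>) H"
    by (simp add: Z_def W_def H_def vec_eq_iff cmat_scale_def matrix_matrix_mult_def
        sum_distrib_left sum_subtractf sum_negf algebra_simps)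
  have "dt = 2 * s\<^sup>2" and "s \<ge> 0"
    using \<open>dt \<ge> 0\<close> by (simp_all add: s_def)
  then have exp_arg: "cmat_scale (- \<i> * of_real dt) H = (2 * s\<^sup>2) *\<^sub>R (W ** Z - Z ** W)"
    and s4: "s ^ 4 = dt\<^sup>2 / 4"
    unfolding cmat_scale_mult_of_real comm by (simp_all add: power_mult_distrib flip: power_mult)
  have norm_comm: "spec_norm (W ** Z - Z ** W) = spec_norm H"
    by (simp add: comm spec_norm_cmat_scale)
  have norms: "spec_norm Z = spec_norm A" "spec_norm W = spec_norm B"
    by (simp_all add: Z_def W_def spec_norm_cmat_scale)
  have "skew_hermitian_mat Z" and "skew_hermitian_mat W"
    using assms(1,2) by (simp_all add: Z_def W_def skew_hermitian_mat_cmat_scale_i)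
  from spec_norm_group_commutator_product_minus_exp_le[OF this \<open>s \<ge> 0\<close>] show ?thesis
    unfolding s_def[symmetric] S exp_arg norm_comm norms s4 by (simp add: algebra_simps)
qed

end
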